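(* Let $d\ge 8$ be an even integer and let $B$ be a bubble gadget properly attached to $S$ in a graph $G$. Let $H$ be a $(d+1)$-diverse induced subgraph of $G$ such that at least one vertex of the top row of $B$, or at least two vertices of the rightmost column of $B$, have no neighbor in $V(H)\setminus V(B)$. Then $H$ contains at most one vertex of $B$.
   Context: Two distinct vertices $u,v$ of a graph $H$ are $d$-twins in $H$ if $|(N_H(u)\setminus N_H[v])\cup(N_H(v)\setminus N_H[u])|\le d$. A graph is $(d+1)$-diverse if it has at least two vertices and no pair of $d$-twins. The $a\times b$ rook graph has vertex set $\{(i,j): i\in[a], j\in[b]\}$, two distinct vertices adjacent iff they agree in some coordinate; view it as a grid with rows and columns. A bubble gadget $B$ (for $d$) is the $w\times w$ rook graph with $w=d/2+2$, minus the two rightmost vertices of its top row (so the top row has $d/2$ vertices and the rightmost column has $d/2+1$ vertices). If $B$ is an induced subgraph of $G$ and $S$ is the set of vertices outside $V(B)$ with a neighbor in $V(B)$, then $B$ is properly attached to $S$ in $G$ if every vertex of the top row and of the rightmost column of $B$ has one or two neighbors in $V(G)\setminus V(B)$, while every other vertex of $B$ has no neighbor outside $V(B)$. *)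

theory Defs
  imports Main
begin

definition graph :: "'a set \<Rightarrow> ('a \<Rightarrow> 'a \<Rightarrow> bool) \<Rightarrow> bool" where
  "graph V E \<longleftrightarrow> finite V \<and> (\<forall>u v. E u v \<longrightarrow> u \<in> V \<and> v \<in> V)
      \<and> (\<forall>u v. E u v \<longrightarrow> E v u) \<and> (\<forall>u. \<not> E u u)"

definition nbh :: "('a \<Rightarrow> 'a \<Rightarrow> bool) \<Rightarrow> 'a set \<Rightarrow> 'a \<Rightarrow> 'a set" where
  "nbh E X u = {x \<in> X. E u x}"

definition cnbh :: "('a \<Rightarrow> 'a \<Rightarrow> bool) \<Rightarrow> 'a set \<Rightarrow> 'a \<Rightarrow> 'a set" where
  "cnbh E X u = insert u (nbh E X u)"

definition d_twins :: "('a \<Rightarrow> 'a \<Rightarrow> bool) \<Rightarrow> 'a set \<Rightarrow> nat \<Rightarrow> 'a \<Rightarrow> 'a \<Rightarrow> bool" where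
  "d_twins E X d u v \<longleftrightarrow> u \<in> X \<and> v \<in> X \<and> u \<noteq> v \<and>
     card ((nbh E X u - cnbh E X v) \<union> (nbh E X v - cnbh E X u)) \<le> d"

definition diverse :: "('a \<Rightarrow> 'a \<Rightarrow> bool) \<Rightarrow> 'a set \<Rightarrow> nat \<Rightarrow> bool" where
  "diverse E X k \<longleftrightarrow> card X \<ge> 2 \<and> \<not> (\<exists>u v. d_twins E X (k - 1) u v)"

text \<open>Rook graph adjacency on coordinates (row, column).\<close>
definition rook_adj :: "nat \<times> nat \<Rightarrow> nat \<times> nat \<Rightarrow> bool" where
  "rook_adj p q \<longleftrightarrow> p \<noteq> q \<and> (fst p = fst q \<or> snd p = snd q)"

text \<open>Bubble gadget coordinates for d: rows 1..w (row 1 is the top row), columns 1..w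
  (column w is the rightmost), w = d/2+2, minus the two rightmost vertices of the top row.\<close>
definition bubble_w :: "nat \<Rightarrow> nat" where
  "bubble_w d = d div 2 + 2"

definition bubble_coords :: "nat \<Rightarrow> (nat \<times> nat) set" where
  "bubble_coords d = ({1..bubble_w d} \<times> {1..bubble_w d}) - {(1, bubble_w d - 1), (1, bubble_w d)}"

definition bubble_top :: "nat \<Rightarrow> (nat \<times> nat) set" where
  "bubble_top d = {(1, j) | j. j \<in> {1..bubble_w d - 2}}"

definition bubble_right :: "nat \<Rightarrow> (nat \<times> nat) set" where
  "bubble_right d = {(i, bubble_w d) | i. i \<in> {2..bubble_w d}}"

definition bubble_in :: "nat \<Rightarrow> 'a set \<Rightarrow> ('a \<Rightarrow> 'a \<Rightarrow> bool) \<Rightarrow> (nat \<times> nat \<Rightarrow> 'a) \<Rightarrow> bool" where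
  "bubble_in d V E f \<longleftrightarrow> inj_on f (bubble_coords d) \<and> f ` bubble_coords d \<subseteq> V \<and>
     (\<forall>p\<in>bubble_coords d. \<forall>q\<in>bubble_coords d. E (f p) (f q) \<longleftrightarrow> rook_adj p q)"

definition attach_set :: "nat \<Rightarrow> 'a set \<Rightarrow> ('a \<Rightarrow> 'a \<Rightarrow> bool) \<Rightarrow> (nat \<times> nat \<Rightarrow> 'a) \<Rightarrow> 'a set" where
  "attach_set d V E f = {x \<in> V - f ` bubble_coords d. \<exists>b\<in>f ` bubble_coords d. E x b}"

definition properly_attached ::
  "nat \<Rightarrow> 'a set \<Rightarrow> ('a \<Rightarrow> 'a \<Rightarrow> bool) \<Rightarrow> (nat \<times> nat \<Rightarrow> 'a) \<Rightarrow> 'a set \<Rightarrow> bool" where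
  "properly_attached d V E f S \<longleftrightarrow> bubble_in d V E f \<and> S = attach_set d V E f \<and>
     (\<forall>p\<in>bubble_top d \<union> bubble_right d.
        card (nbh E (V - f ` bubble_coords d) (f p)) \<in> {1, 2}) \<and>
     (\<forall>p\<in>bubble_coords d - (bubble_top d \<union> bubble_right d).
        nbh E (V - f ` bubble_coords d) (f p) = {})"

end

theory Submission
  imports Defs
begin

text \<open>
  Let X be the set of gadget cells whose vertex lies in H, and w = d/2 + 2, so d = 2w - 4.
  Two vertices of H in the gadget are distinguished only by their private neighbours inside the
  gadget and by their at most two neighbours outside it, and cells off the top row and the
  rightmost column have no outside neighbours at all. For two cells of X in a common row, the
  private neighbours lie in their two columns, so diversity forces these columns to contain
  almost 2w cells of X, and symmetrically for columns. Hence two interior cells of X in a common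
  column make one of their rows lie entirely in X, and two in a common row make one of their
  columns full. A full row gives a full column and vice versa, and together with a free top-row
  vertex or two free right-column vertices this produces a pair of d-twins. So interior rows and
  columns meet X in at most two cells, which is too few for two cells of X to share a line; but
  cells sharing no line have no private neighbours, and are d-twins.
\<close>

lemma mem_bubble_coords:
  "(i, j) \<in> bubble_coords d \<longleftrightarrow>
     i \<in> {1..bubble_w d} \<and> j \<in> {1..bubble_w d} \<and> (i = 1 \<longrightarrow> j \<le> bubble_w d - 2)"
  unfolding bubble_coords_def bubble_w_def by auto

lemma card_le_image_interval:
  assumes "P \<subseteq> g ` {a..b}"
  shows "card P \<le> b + 1 - a"
proof -
  have "card P \<le> card (g ` {a..b})"
    using assms by (rule card_mono[rotated]) simp
  also have "\<dots> \<le> b + 1 - a"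
    using card_image_le[of "{a..b}" g] by simp
  finally show ?thesis .
qed

lemma card_le_2_if_subset_insert:
  assumes "finite A" "B \<subseteq> insert x A" "\<And>p q. p \<in> A \<Longrightarrow> q \<in> A \<Longrightarrow> p = q"
  shows "card B \<le> 2"
proof -
  have "card A \<le> 1"
    using card_le_Suc0_iff_eq[OF assms(1)] assms(3) by auto
  then have "card (insert x A) \<le> 2"
    using assms(1) by (simp add: card_insert_if)
  then show ?thesis
    using assms(1,2) by (meson card_mono finite.insertI le_trans)
qed

definition private_nbrs :: "('b \<Rightarrow> 'b \<Rightarrow> bool) \<Rightarrow> 'b set \<Rightarrow> 'b \<Rightarrow> 'b \<Rightarrow> 'b set" where
  "private_nbrs A X u v = {p \<in> X. A u p \<and> \<not> A v p \<and> p \<noteq> v}"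

definition twin_dist :: "('a \<Rightarrow> 'a \<Rightarrow> bool) \<Rightarrow> 'a set \<Rightarrow> 'a \<Rightarrow> 'a \<Rightarrow> nat" where
  "twin_dist E X u v = card ((nbh E X u - cnbh E X v) \<union> (nbh E X v - cnbh E X u))"

lemma diverse_twin_dist_gt:
  assumes "diverse E X (k + 1)" "u \<in> X" "v \<in> X" "u \<noteq> v"
  shows "k < twin_dist E X u v"
  using assms unfolding diverse_def d_twins_def twin_dist_def by force

lemma twin_dist_le_private_nbrs:
  assumes "finite H" and "inj_on f B"
    and adj: "\<And>p q. p \<in> B \<Longrightarrow> q \<in> B \<Longrightarrow> E (f p) (f q) \<longleftrightarrow> A p q"
    and "u \<in> B" "v \<in> B"
  defines "X \<equiv> {p \<in> B. f p \<in> H}"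
  shows "twin_dist E H (f u) (f v) \<le>
           card (private_nbrs A X u v) + card (private_nbrs A X v u)
           + card (nbh E (H - f ` B) (f u)) + card (nbh E (H - f ` B) (f v))"
proof -
  let ?out = "\<lambda>x. nbh E (H - f ` B) x"
  have "(nbh E H (f u) - cnbh E H (f v)) \<union> (nbh E H (f v) - cnbh E H (f u))
          \<subseteq> (f ` private_nbrs A X u v \<union> f ` private_nbrs A X v u) \<union> (?out (f u) \<union> ?out (f v))"
    using \<open>u \<in> B\<close> \<open>v \<in> B\<close>
    by (auto simp: nbh_def cnbh_def private_nbrs_def X_def adj)
  moreover have "finite ((f ` private_nbrs A X u v \<union> f ` private_nbrs A X v u) \<union> (?out (f u) \<union> ?out (f v)))"
    using \<open>finite H\<close> by (auto simp: nbh_def private_nbrs_def X_def intro: finite_subset)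
  ultimately have "twin_dist E H (f u) (f v)
      \<le> card (f ` private_nbrs A X u v \<union> f ` private_nbrs A X v u) + card (?out (f u) \<union> ?out (f v))"
    unfolding twin_dist_def by (meson card_Un_le card_mono le_trans)
  also have "\<dots> \<le> card (private_nbrs A X u v) + card (private_nbrs A X v u)
      + (card (?out (f u)) + card (?out (f v)))"
  proof -
    have "card (f ` private_nbrs A X x y) = card (private_nbrs A X x y)" for x y
      by (rule card_image, rule inj_on_subset[OF \<open>inj_on f B\<close>])
        (auto simp: private_nbrs_def X_def)
    then show ?thesis
      by (metis add_mono card_Un_le)
  qed
  finally show ?thesis by simp
qed

lemma properly_attached_outside_le_2:
  assumes "properly_attached d V E f S" "finite V" "H \<subseteq> V" "p \<in> bubble_coords d"
  shows "card (nbh E (H - f ` bubble_coords d) (f p)) \<le> 2"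
proof -
  let ?B = "bubble_coords d"
  have "card (nbh E (V - f ` ?B) (f p)) \<in> {1, 2} \<or> nbh E (V - f ` ?B) (f p) = {}"
    using assms(1,4) unfolding properly_attached_def by blast
  then have "card (nbh E (V - f ` ?B) (f p)) \<le> 2"
    by auto
  moreover have "nbh E (H - f ` ?B) (f p) \<subseteq> nbh E (V - f ` ?B) (f p)"
    using \<open>H \<subseteq> V\<close> by (auto simp: nbh_def)
  moreover have "finite (nbh E (V - f ` ?B) (f p))"
    using \<open>finite V\<close> by (simp add: nbh_def)
  ultimately show ?thesis
    by (meson card_mono le_trans)
qed

lemma properly_attached_outside_interior:
  assumes "properly_attached d V E f S" "H \<subseteq> V" "p \<in> bubble_coords d"
    and "fst p \<noteq> 1" "snd p \<noteq> bubble_w d"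
  shows "nbh E (H - f ` bubble_coords d) (f p) = {}"
proof -
  have "p \<notin> bubble_top d \<union> bubble_right d"
    using assms(4,5) by (auto simp: bubble_top_def bubble_right_def)
  then have "nbh E (V - f ` bubble_coords d) (f p) = {}"
    using assms(1,3) unfolding properly_attached_def by blast
  then show ?thesis
    using \<open>H \<subseteq> V\<close> by (auto simp: nbh_def)
qed

text \<open>
  X stands for the cells whose vertex lies in H and outdeg p for the number of neighbours of that
  vertex in H outside the gadget; separated is what (d+1)-diversity of H yields for them
  (bubble_trace_of_diverse).
\<close>

locale bubble_trace =
  fixes d :: nat and X :: "(nat \<times> nat) set" and outdeg :: "nat \<times> nat \<Rightarrow> nat"
  assumes even_d: "even d" and d_ge_6: "6 \<le> d"
    and X_subset: "X \<subseteq> bubble_coords d"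
    and outdeg_le_2: "p \<in> X \<Longrightarrow> outdeg p \<le> 2"
    and outdeg_interior: "p \<in> X \<Longrightarrow> fst p \<noteq> 1 \<Longrightarrow> snd p \<noteq> bubble_w d \<Longrightarrow> outdeg p = 0"
    and separated: "u \<in> X \<Longrightarrow> v \<in> X \<Longrightarrow> u \<noteq> v \<Longrightarrow>
      d < card (private_nbrs rook_adj X u v) + card (private_nbrs rook_adj X v u) + outdeg u + outdeg v"
begin

abbreviation "w \<equiv> bubble_w d"

definition "row i = {p \<in> X. fst p = i}"
definition "col j = {p \<in> X. snd p = j}"

lemma d_eq: "d = 2 * w - 4" and w_ge_5: "5 \<le> w"
  using even_d d_ge_6 by (auto simp: bubble_w_def)

lemma mem_X: "p \<in> X \<Longrightarrow> fst p \<in> {1..w} \<and> snd p \<in> {1..w} \<and> (fst p = 1 \<longrightarrow> snd p \<le> w - 2)"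
  using X_subset mem_bubble_coords[of "fst p" "snd p" d] by auto

lemma finite_X: "finite X"
  using X_subset by (rule finite_subset) (simp add: bubble_coords_def)

lemma card_row_le: "card (row i) \<le> w"
proof -
  have "row i \<subseteq> Pair i ` {1..w}"
    by (auto simp: row_def dest!: mem_X)
  then show ?thesis
    using card_le_image_interval by fastforce
qed

lemma card_row_1_le: "card (row 1) \<le> w - 2"
proof -
  have "row 1 \<subseteq> Pair 1 ` {1..w - 2}"
    by (auto simp: row_def dest!: mem_X)
  then show ?thesis
    using card_le_image_interval by fastforce
qed

lemma card_col_le: "card (col j) \<le> w"
proof -
  have "col j \<subseteq> (\<lambda>i. (i, j)) ` {1..w}"
    by (auto simp: col_def dest!: mem_X)
  then show ?thesis
    using card_le_image_interval by fastforce
qed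

lemma card_col_right_le:
  assumes "w - 1 \<le> j" shows "card (col j) \<le> w - 1"
proof -
  have "col j \<subseteq> (\<lambda>i. (i, j)) ` {2..w}"
    using assms by (auto simp: col_def dest!: mem_X)
  then show ?thesis
    using card_le_image_interval by fastforce
qed

lemma full_row_mem: "w \<le> card (row i) \<Longrightarrow> j \<in> {1..w} \<Longrightarrow> (i, j) \<in> X"
proof -
  assume full: "w \<le> card (row i)" and j: "j \<in> {1..w}"
  have "row i \<subseteq> Pair i ` {1..w}"
    by (auto simp: row_def dest!: mem_X)
  moreover have "card (Pair i ` {1..w}) = w"
    by (subst card_image) (auto simp: inj_on_def)
  ultimately have "row i = Pair i ` {1..w}"
    using full by (intro card_seteq) auto
  then have "(i, j) \<in> row i"
    using j by blast
  then show "(i, j) \<in> X"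
    by (simp add: row_def)
qed

lemma full_col_mem: "w \<le> card (col j) \<Longrightarrow> i \<in> {1..w} \<Longrightarrow> (i, j) \<in> X"
proof -
  assume full: "w \<le> card (col j)" and i: "i \<in> {1..w}"
  have "col j \<subseteq> (\<lambda>i. (i, j)) ` {1..w}"
    by (auto simp: col_def dest!: mem_X)
  moreover have "card ((\<lambda>i. (i, j)) ` {1..w}) = w"
    by (subst card_image) (auto simp: inj_on_def)
  ultimately have "col j = (\<lambda>i. (i, j)) ` {1..w}"
    using full by (intro card_seteq) auto
  then have "(i, j) \<in> col j"
    using i by blast
  then show "(i, j) \<in> X"
    by (simp add: col_def)
qed

lemma same_row_bound:
  assumes "u \<in> X" "v \<in> X" "u \<noteq> v" "fst u = fst v"
  shows "2 * w - 1 \<le> card (col (snd u)) + card (col (snd v)) + outdeg u + outdeg v"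
proof -
  \<comment> \<open>the row neighbours of x are also adjacent to y\<close>
  have private_lt: "card (private_nbrs rook_adj X x y) < card (col (snd x))"
    if "x \<in> X" "fst x = fst y" for x y
  proof (rule psubset_card_mono)
    show "finite (col (snd x))"
      using finite_X by (simp add: col_def)
    show "private_nbrs rook_adj X x y \<subset> col (snd x)"
      using that by (auto simp: private_nbrs_def rook_adj_def col_def)
  qed
  show ?thesis
    using private_lt[of u v] private_lt[of v u] separated[OF assms(1-3)] assms d_eq w_ge_5
    by linarith
qed

lemma same_col_bound:
  assumes "u \<in> X" "v \<in> X" "u \<noteq> v" "snd u = snd v"
  shows "2 * w - 1 \<le> card (row (fst u)) + card (row (fst v)) + outdeg u + outdeg v"
proof -
  have private_lt: "card (private_nbrs rook_adj X x y) < card (row (fst x))"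
    if "x \<in> X" "snd x = snd y" for x y
  proof (rule psubset_card_mono)
    show "finite (row (fst x))"
      using finite_X by (simp add: row_def)
    show "private_nbrs rook_adj X x y \<subset> row (fst x)"
      using that by (auto simp: private_nbrs_def rook_adj_def row_def)
  qed
  show ?thesis
    using private_lt[of u v] private_lt[of v u] separated[OF assms(1-3)] assms d_eq w_ge_5
    by linarith
qed

lemma interior_pair_in_col:
  assumes "(i, j) \<in> X" "(i', j) \<in> X" "i \<noteq> i'" "2 \<le> i" "2 \<le> i'" "j < w"
  shows "w \<le> card (row i) \<or> w \<le> card (row i')"
  using same_col_bound[of "(i, j)" "(i', j)"] assms outdeg_interior[OF assms(1)] outdeg_interior[OF assms(2)]
    card_row_le[of i] card_row_le[of i']
  by (simp, linarith)

lemma interior_pair_in_row: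
  assumes "(i, j) \<in> X" "(i, j') \<in> X" "j \<noteq> j'" "2 \<le> i" "j < w" "j' < w"
  shows "w \<le> card (col j) \<or> w \<le> card (col j')"
  using same_row_bound[of "(i, j)" "(i, j')"] assms outdeg_interior[OF assms(1)] outdeg_interior[OF assms(2)]
    card_col_le[of j] card_col_le[of j']
  by (simp, linarith)

lemma full_col_le: "w \<le> card (col j) \<Longrightarrow> j \<le> w - 2"
  using card_col_right_le[of j] w_ge_5 by linarith

lemma full_row_ge: "w \<le> card (row i) \<Longrightarrow> 2 \<le> i"
  using card_row_1_le full_row_mem[of i 1] mem_X w_ge_5 by (cases "i = 1") force+

lemma full_row_imp_full_col:
  assumes "w \<le> card (row i)"
  obtains j where "w \<le> card (col j)"
  using interior_pair_in_row[of i 1 2] full_row_mem[OF assms] full_row_ge[OF assms] w_ge_5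
  by force

lemma full_col_imp_full_row:
  assumes "w \<le> card (col j)"
  obtains i where "w \<le> card (row i)"
  using interior_pair_in_col[of 2 j 3] full_col_mem[OF assms] full_col_le[OF assms] w_ge_5
  by force

lemma top_free_excludes_full_row:
  assumes "j \<in> {1..w - 2}" "outdeg (1, j) = 0" "w \<le> card (row i)"
  shows False
proof -
  have "(i, j) \<in> X" "(i, w - 1) \<in> X" "2 \<le> i"
    using assms full_row_mem full_row_ge w_ge_5 by auto
  then have "w \<le> card (col j)"
    using interior_pair_in_row[of i j "w - 1"] full_col_le[of "w - 1"] assms(1) w_ge_5 by force
  then have "(1, j) \<in> X" "(2, j) \<in> X"
    using full_col_mem w_ge_5 by auto
  moreover have "outdeg (2, j) = 0"
    using outdeg_interior \<open>(2, j) \<in> X\<close> assms(1) w_ge_5 by auto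
  ultimately show False
    using same_col_bound[of "(1, j)" "(2, j)"] assms(2) card_row_1_le card_row_le[of 2] w_ge_5
    by simp
qed

lemma right_free_excludes_full_col:
  assumes "i \<in> {2..w}" "i' \<in> {2..w}" "i \<noteq> i'" "outdeg (i, w) = 0" "outdeg (i', w) = 0"
    and "w \<le> card (col j)"
  shows False
proof -
  have "(i, j) \<in> X" "(i', j) \<in> X" "j < w"
    using assms full_col_mem full_col_le w_ge_5 by force+
  then obtain r where r: "r \<in> {i, i'}" "w \<le> card (row r)"
    using interior_pair_in_col[of i j i'] assms by auto
  then have "(r, w) \<in> X" "(r, w - 1) \<in> X" "outdeg (r, w) = 0" "outdeg (r, w - 1) = 0"
    using assms full_row_mem outdeg_interior w_ge_5 by auto
  moreover have "(r, w) \<noteq> (r, w - 1)"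
    using w_ge_5 by simp
  ultimately show False
    using same_row_bound[of "(r, w)" "(r, w - 1)"]
      card_col_right_le[of w] card_col_right_le[of "w - 1"] w_ge_5
    by simp
qed

end

locale unattached_bubble_trace = bubble_trace +
  assumes free_vertex: "(\<exists>p \<in> bubble_top d. outdeg p = 0)
    \<or> (\<exists>p \<in> bubble_right d. \<exists>q \<in> bubble_right d. p \<noteq> q \<and> outdeg p = 0 \<and> outdeg q = 0)"
begin

lemma no_full_row: "card (row i) < w"
proof (rule ccontr)
  assume "\<not> card (row i) < w"
  then have full: "w \<le> card (row i)" by simp
  then obtain j where "w \<le> card (col j)"
    by (rule full_row_imp_full_col)
  from free_vertex show False
  proof
    assume "\<exists>p \<in> bubble_top d. outdeg p = 0"
    then obtain j' where "j' \<in> {1..w - 2}" "outdeg (1, j') = 0"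
      by (auto simp: bubble_top_def)
    with full show False
      using top_free_excludes_full_row by blast
  next
    assume "\<exists>p \<in> bubble_right d. \<exists>q \<in> bubble_right d. p \<noteq> q \<and> outdeg p = 0 \<and> outdeg q = 0"
    then obtain i' i'' where "i' \<in> {2..w}" "i'' \<in> {2..w}" "i' \<noteq> i''" "outdeg (i', w) = 0" "outdeg (i'', w) = 0"
      by (auto simp: bubble_right_def)
    with \<open>w \<le> card (col j)\<close> show False
      using right_free_excludes_full_col by blast
  qed
qed

lemma no_full_col: "card (col j) < w"
  using full_col_imp_full_row no_full_row not_less by metis

lemma card_row_le_2: "2 \<le> i \<Longrightarrow> card (row i) \<le> 2"
proof (rule card_le_2_if_subset_insert)
  show "row i \<subseteq> insert (i, w) {p \<in> row i. snd p < w}"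
    by (auto simp: row_def dest: mem_X)
  show "finite {p \<in> row i. snd p < w}"
    using finite_X by (simp add: row_def)
  show "p = q" if "2 \<le> i" "p \<in> {p \<in> row i. snd p < w}" "q \<in> {p \<in> row i. snd p < w}" for p q
    using that interior_pair_in_row[of i "snd p" "snd q"] no_full_col[of "snd p"] no_full_col[of "snd q"]
    by (cases p, cases q) (auto simp: row_def)
qed

lemma card_col_le_2: "j < w \<Longrightarrow> card (col j) \<le> 2"
proof (rule card_le_2_if_subset_insert)
  show "col j \<subseteq> insert (1, j) {p \<in> col j. 2 \<le> fst p}"
    by (auto simp: col_def dest: mem_X)
  show "finite {p \<in> col j. 2 \<le> fst p}"
    using finite_X by (simp add: col_def)
  show "p = q" if "j < w" "p \<in> {p \<in> col j. 2 \<le> fst p}" "q \<in> {p \<in> col j. 2 \<le> fst p}" for p q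
    using that interior_pair_in_col[of "fst p" j "fst q"] no_full_row[of "fst p"] no_full_row[of "fst q"]
    by (cases p, cases q) (auto simp: col_def)
qed

lemma no_pair_in_row:
  assumes "(i, j) \<in> X" "(i, j') \<in> X" "j \<noteq> j'"
  shows False
proof -
  have bound: "2 * w - 1 \<le> card (col j) + card (col j') + outdeg (i, j) + outdeg (i, j')"
    using same_row_bound[of "(i, j)" "(i, j')"] assms by simp
  have "i \<in> {1..w}" "j \<le> w" "j' \<le> w" "outdeg (i, j) \<le> 2" "outdeg (i, j') \<le> 2"
    using assms mem_X outdeg_le_2 by fastforce+
  then consider "i = 1" "j < w" "j' < w" | "2 \<le> i" "j < w" "j' < w"
    | "2 \<le> i" "j = w" "j' < w" | "2 \<le> i" "j < w" "j' = w"
    using assms mem_X w_ge_5 by fastforce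
  then show False
  proof cases
    case 1
    then show False
      using bound \<open>outdeg (i, j) \<le> 2\<close> \<open>outdeg (i, j') \<le> 2\<close> card_col_le_2[of j] card_col_le_2[of j'] w_ge_5
      by linarith
  next
    case 2
    then show False
      using interior_pair_in_row[OF assms] no_full_col not_less by blast
  next
    case 3
    then show False
      using bound \<open>outdeg (i, j) \<le> 2\<close> outdeg_interior[OF assms(2)] card_col_right_le[of j] card_col_le_2[of j'] w_ge_5
      by simp
  next
    case 4
    then show False
      using bound \<open>outdeg (i, j') \<le> 2\<close> outdeg_interior[OF assms(1)] card_col_right_le[of j'] card_col_le_2[of j] w_ge_5
      by simp
  qed
qed

lemma no_pair_in_col:
  assumes "(i, j) \<in> X" "(i', j) \<in> X" "i \<noteq> i'"
  shows False
proof -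
  have bound: "2 * w - 1 \<le> card (row i) + card (row i') + outdeg (i, j) + outdeg (i', j)"
    using same_col_bound[of "(i, j)" "(i', j)"] assms by simp
  have "j \<in> {1..w}" "1 \<le> i" "1 \<le> i'" "outdeg (i, j) \<le> 2" "outdeg (i', j) \<le> 2"
    using assms mem_X outdeg_le_2 by fastforce+
  then consider "j = w" "2 \<le> i" "2 \<le> i'" | "j < w" "2 \<le> i" "2 \<le> i'"
    | "j < w" "i = 1" "2 \<le> i'" | "j < w" "2 \<le> i" "i' = 1"
    using assms mem_X w_ge_5 by fastforce
  then show False
  proof cases
    case 1
    then show False
      using bound \<open>outdeg (i, j) \<le> 2\<close> \<open>outdeg (i', j) \<le> 2\<close> card_row_le_2[of i] card_row_le_2[of i'] w_ge_5
      by linarith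
  next
    case 2
    then show False
      using interior_pair_in_col[OF assms] no_full_row not_less by blast
  next
    case 3
    then show False
      using bound \<open>outdeg (i, j) \<le> 2\<close> outdeg_interior[OF assms(2)] card_row_1_le card_row_le_2[of i'] w_ge_5
      by simp
  next
    case 4
    then show False
      using bound \<open>outdeg (i', j) \<le> 2\<close> outdeg_interior[OF assms(1)] card_row_1_le card_row_le_2[of i] w_ge_5
      by simp
  qed
qed

lemma rook_independent: "p \<in> X \<Longrightarrow> q \<in> X \<Longrightarrow> \<not> rook_adj p q"
  using no_pair_in_row no_pair_in_col unfolding rook_adj_def by (cases p, cases q) fastforce

lemma card_X_le_1: "card X \<le> 1"
proof (rule ccontr)
  assume "\<not> card X \<le> 1"
  then obtain u v where uv: "u \<in> X" "v \<in> X" "u \<noteq> v"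
    using finite_X card_le_Suc0_iff_eq by (metis One_nat_def)
  have no_private: "private_nbrs rook_adj X x y = {}" if "x \<in> X" for x y
    using rook_independent that unfolding private_nbrs_def by blast
  have "d < outdeg u + outdeg v"
    using separated[OF uv] no_private[OF uv(1)] no_private[OF uv(2)] by simp
  then show False
    using outdeg_le_2[OF uv(1)] outdeg_le_2[OF uv(2)] d_eq w_ge_5 by linarith
qed

end

lemma bubble_trace_of_diverse:
  assumes "even d" "6 \<le> d" "graph V E" "properly_attached d V E f S" "H \<subseteq> V"
    and "diverse E H (d + 1)"
  shows "bubble_trace d {p \<in> bubble_coords d. f p \<in> H}
    (\<lambda>p. card (nbh E (H - f ` bubble_coords d) (f p)))"
    (is "bubble_trace d ?X ?outdeg")
proof
  let ?B = "bubble_coords d"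
  have "finite V"
    using \<open>graph V E\<close> by (simp add: graph_def)
  with \<open>H \<subseteq> V\<close> have "finite H"
    by (rule finite_subset)
  have inj: "inj_on f ?B"
    and adj: "\<And>p q. p \<in> ?B \<Longrightarrow> q \<in> ?B \<Longrightarrow> E (f p) (f q) \<longleftrightarrow> rook_adj p q"
    using \<open>properly_attached d V E f S\<close> by (auto simp: properly_attached_def bubble_in_def)
  show "?outdeg p \<le> 2" if "p \<in> ?X" for p
    using properly_attached_outside_le_2[OF assms(4) \<open>finite V\<close> assms(5)] that by simp
  show "?outdeg p = 0" if "p \<in> ?X" "fst p \<noteq> 1" "snd p \<noteq> bubble_w d" for p
    using properly_attached_outside_interior[OF assms(4,5)] that by simp
  show "d < card (private_nbrs rook_adj ?X u v) + card (private_nbrs rook_adj ?X v u)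
      + ?outdeg u + ?outdeg v"
    if "u \<in> ?X" "v \<in> ?X" "u \<noteq> v" for u v
  proof -
    have "d < twin_dist E H (f u) (f v)"
      using diverse_twin_dist_gt assms(6) that inj by (force dest: inj_onD)
    also have "\<dots> \<le> card (private_nbrs rook_adj ?X u v) + card (private_nbrs rook_adj ?X v u)
        + ?outdeg u + ?outdeg v"
      using twin_dist_le_private_nbrs[where A = rook_adj, OF \<open>finite H\<close> inj adj] that by simp
    finally show ?thesis .
  qed
qed (use assms(1,2) in auto)

theorem lemma5p3:
  fixes d :: nat and V :: "'a set" and E :: "'a \<Rightarrow> 'a \<Rightarrow> bool"
    and f :: "nat \<times> nat \<Rightarrow> 'a" and S H :: "'a set"
  assumes "even d" and "d \<ge> 8"
    and "graph V E"
    and "properly_attached d V E f S"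
    and "H \<subseteq> V"
    and "diverse E H (d + 1)"
    and "(\<exists>p\<in>bubble_top d. nbh E (H - f ` bubble_coords d) (f p) = {})
         \<or> (\<exists>p\<in>bubble_right d. \<exists>q\<in>bubble_right d. p \<noteq> q \<and>
              nbh E (H - f ` bubble_coords d) (f p) = {} \<and>
              nbh E (H - f ` bubble_coords d) (f q) = {})"
  shows "card (H \<inter> f ` bubble_coords d) \<le> 1"
proof -
  let ?B = "bubble_coords d"
  define X where "X = {p \<in> ?B. f p \<in> H}"
  define outdeg where "outdeg p = card (nbh E (H - f ` ?B) (f p))" for p
  have "bubble_trace d X outdeg"
    unfolding X_def outdeg_def using assms(1-6) by (intro bubble_trace_of_diverse) auto
  moreover have "unattached_bubble_trace_axioms d outdeg"
    using assms(7) unfolding unattached_bubble_trace_axioms_def outdeg_def by (metis card.empty)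
  ultimately interpret unattached_bubble_trace d X outdeg
    by (rule unattached_bubble_trace.intro)
  have "inj_on f X"
    using \<open>properly_attached d V E f S\<close> X_subset
    by (auto simp: properly_attached_def bubble_in_def intro: inj_on_subset)
  then have "card (f ` X) = card X"
    by (rule card_image)
  moreover have "H \<inter> f ` ?B = f ` X"
    by (auto simp: X_def)
  ultimately show ?thesis
    using card_X_le_1 by simp
qed

end
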